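(* Let $K=K_0\supset K_1\supset K_2\supset\cdots$ be a module with a decreasing filtration by submodules (with the convention $K_q=K_0$ for $q<0$), and for each integer $r\ge -1$ let $\partial_r:K\to K$ be a linear map with $\partial_r(K_p)\subset K_p$ for all $p$, $\partial_{-1}=0$, and $\partial_r\circ\partial_s=0$ for all $r,s\ge -1$. For $r\ge -1$ and integers $p$ put $Z^r_p=\{x\in K_p:\ \partial_r x\in K_{p+r}\}$. Assume the following property: for all $r\ge 0$ and all $p$, if $x\in Z^r_p$ or $x\in Z^{r-1}_p$, then $\partial_r x-\partial_{r-1}x\in Z^{r-1}_{p+r}$. For $r\ge 0$ define $$E^r_p=Z^r_p\big/\bigl(\partial_{r-1}Z^{r-1}_{p-r+1}+Z^{r-1}_{p+1}\bigr),\qquad E^r_\cdot=\bigoplus_p E^r_p .$$ Then for every $r\ge 0$ there is a differential $d^r$ on the graded module $E^r_\cdot$, induced by $\partial_r$ and mapping $E^r_p$ to $E^r_{p+r}$, such that the cohomology $H(E^r_\cdot)$ (in degree $p$: $\ker d^r_p/\operatorname{im} d^r_{p-r}$) is canonically isomorphic to $E^{r+1}_\cdot$ (degree by degree, $H^p(E^r_\cdot)\cong E^{r+1}_p$).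
   Context: The maps $\partial_r$ play the role of varying boundary operators converging in the filtration topology; the denominators in the definition of $E^r_p$ are submodules of $Z^r_p$ under the stated assumptions. *)

theory Defs
  imports Complex_Main "HOL-Library.Set_Algebras"
begin

definition quot :: "'b::plus set \<Rightarrow> 'b set \<Rightarrow> 'b set set" where
  "quot M N = (\<lambda>x. x +o N) ` M"

definition Zset :: "(int \<Rightarrow> 'a::ab_group_add set) \<Rightarrow> (int \<Rightarrow> 'a \<Rightarrow> 'a) \<Rightarrow> int \<Rightarrow> int \<Rightarrow> 'a set" where
  "Zset F D r p = {x \<in> F p. D r x \<in> F (p + r)}"

definition Den :: "(int \<Rightarrow> 'a::ab_group_add set) \<Rightarrow> (int \<Rightarrow> 'a \<Rightarrow> 'a) \<Rightarrow> int \<Rightarrow> int \<Rightarrow> 'a set" where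
  "Den F D r p = D (r - 1) ` Zset F D (r - 1) (p - r + 1) + Zset F D (r - 1) (p + 1)"

definition Eset :: "(int \<Rightarrow> 'a::ab_group_add set) \<Rightarrow> (int \<Rightarrow> 'a \<Rightarrow> 'a) \<Rightarrow> int \<Rightarrow> int \<Rightarrow> 'a set set" where
  "Eset F D r p = quot (Zset F D r p) (Den F D r p)"

text \<open>Cohomology in degree p of a complex (E_p, d_p: E_p \<rightarrow> E_(p+r)) whose
  zero element in degree q is the coset zero q (= the denominator itself):
  ker d_p / im d_(p-r).\<close>
definition cohom :: "(int \<Rightarrow> 'a::ab_group_add set set) \<Rightarrow> (int \<Rightarrow> 'a set) \<Rightarrow> (int \<Rightarrow> 'a set \<Rightarrow> 'a set)
    \<Rightarrow> int \<Rightarrow> int \<Rightarrow> 'a set set set" where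
  "cohom E zero d r p =
     quot {A \<in> E p. d p A = zero (p + r)} (d (p - r) ` E (p - r))"

end

theory Submission
  imports Defs
begin

(* Because D r kills the image of D (r - 1), and D r - D (r - 1) raises the filtration degree
   by r, D r maps the denominator of E^r_p into that of E^r_(p+r); so D r induces d^r on
   cosets, and d^r d^r = 0 since D r D r = 0. A class of E^r_p is a d^r-cycle iff it has a
   representative in Z^(r+1)_p (subtract the z in Z^(r-1)_(p+1) with D r x = D (r - 1) z + u),
   and the d^r-boundaries in degree p are the classes of D r Z^r_(p-r). The cohomology is
   therefore Z^(r+1)_p modulo Z^(r+1)_p \<inter> (D r Z^r_(p-r) + Den^r_p), and this
   intersection is exactly Den^(r+1)_p. *)

section \<open>Additive subgroups and their cosets\<close>

definition additive_subgroup :: "'a::ab_group_add set \<Rightarrow> bool" where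
  "additive_subgroup S \<longleftrightarrow> 0 \<in> S \<and> (\<forall>x\<in>S. \<forall>y\<in>S. x - y \<in> S)"

lemma additive_subgroup_0: "additive_subgroup S \<Longrightarrow> 0 \<in> S"
  by (simp add: additive_subgroup_def)

lemma additive_subgroup_diff: "additive_subgroup S \<Longrightarrow> x \<in> S \<Longrightarrow> y \<in> S \<Longrightarrow> x - y \<in> S"
  by (simp add: additive_subgroup_def)

lemma additive_subgroup_minus: "additive_subgroup S \<Longrightarrow> x \<in> S \<Longrightarrow> - x \<in> S"
  using additive_subgroup_diff[of S 0 x] by (simp add: additive_subgroup_0)

lemma additive_subgroup_add: "additive_subgroup S \<Longrightarrow> x \<in> S \<Longrightarrow> y \<in> S \<Longrightarrow> x + y \<in> S"
  using additive_subgroup_diff[of S x "- y"] by (simp add: additive_subgroup_minus)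

lemma additive_subgroup_diff_mem_iff:
  assumes "additive_subgroup S" and "x - y \<in> S"
  shows "x \<in> S \<longleftrightarrow> y \<in> S"
  using additive_subgroup_add[OF assms(1) assms(2), of y] additive_subgroup_diff[OF assms(1) _ assms(2), of x]
  by auto

lemma additive_subgroup_image:
  assumes "additive_subgroup S" and "additive f"
  shows "additive_subgroup (f ` S)"
  unfolding additive_subgroup_def
proof safe
  show "0 \<in> f ` S"
    using additive_subgroup_0[OF assms(1)] additive.zero[OF assms(2)] by (metis image_eqI)
  show "f x - f y \<in> f ` S" if "x \<in> S" "y \<in> S" for x y
    using additive_subgroup_diff[OF assms(1) that] additive.diff[OF assms(2)] by (metis image_eqI)
qed

lemma additive_subgroup_set_plus:
  assumes "additive_subgroup A" and "additive_subgroup B"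
  shows "additive_subgroup (A + B)"
  unfolding additive_subgroup_def
proof safe
  show "0 \<in> A + B"
    using set_plus_intro[OF additive_subgroup_0[OF assms(1)] additive_subgroup_0[OF assms(2)]] by simp
  fix x y assume "x \<in> A + B" "y \<in> A + B"
  then obtain a b a' b' where "a \<in> A" "b \<in> B" "a' \<in> A" "b' \<in> B" "x = a + b" "y = a' + b'"
    by (auto elim!: set_plus_elim)
  then show "x - y \<in> A + B"
    using additive_subgroup_diff[OF assms(1)] additive_subgroup_diff[OF assms(2)]
      set_plus_intro[of "a - a'" A "b - b'" B]
    by (simp add: algebra_simps)
qed

lemma set_plus_additive_subgroup_absorb:
  assumes "additive_subgroup N" and "S \<subseteq> N" and "S \<noteq> {}"
  shows "S + N = N"
proof
  show "S + N \<subseteq> N"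
    using assms(2) additive_subgroup_add[OF assms(1)] by (auto elim!: set_plus_elim)
  show "N \<subseteq> S + N"
  proof
    fix n assume "n \<in> N"
    obtain s where "s \<in> S" using assms(3) by blast
    then have "n - s \<in> N" using assms(2) additive_subgroup_diff[OF assms(1) \<open>n \<in> N\<close>] by blast
    then show "n \<in> S + N" using set_plus_intro[OF \<open>s \<in> S\<close>, of "n - s" N] by simp
  qed
qed

lemma coset_eq_iff:
  assumes "additive_subgroup N"
  shows "x +o N = y +o N \<longleftrightarrow> x - y \<in> N"
proof -
  have coset: "a +o N = {z. z - a \<in> N}" for a
    by (auto simp: set_minus_plus)
  show ?thesis
  proof
    assume "x +o N = y +o N"
    then show "x - y \<in> N"
      using additive_subgroup_0[OF assms] unfolding coset by (metis diff_self mem_Collect_eq)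
  next
    assume xy: "x - y \<in> N"
    have "z - x \<in> N \<longleftrightarrow> z - y \<in> N" for z
      using additive_subgroup_diff_mem_iff[OF assms, of "z - y" "z - x"] xy by simp
    then show "x +o N = y +o N"
      unfolding coset by blast
  qed
qed

lemma coset_eq_subgroup_iff: "additive_subgroup N \<Longrightarrow> x +o N = N \<longleftrightarrow> x \<in> N"
  using coset_eq_iff[of N x 0] by simp

lemma elt_set_plus_eq_image: "a +o S = (\<lambda>s. a + s) ` S"
  by (auto simp: elt_set_plus_def)

lemma image_coset: "additive f \<Longrightarrow> f ` (x +o N) = f x +o f ` N"
  by (simp add: elt_set_plus_eq_image image_image additive.add)

lemma quot_set_plus:
  assumes "additive_subgroup N"
  shows "quot (S + N) N = quot S N"
  unfolding quot_def
proof (intro equalityI subsetI)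
  fix A assume "A \<in> (\<lambda>x. x +o N) ` (S + N)"
  then obtain s n where "s \<in> S" "n \<in> N" "A = (s + n) +o N"
    by (auto elim!: set_plus_elim)
  moreover from \<open>s \<in> S\<close> \<open>n \<in> N\<close> have "(s + n) +o N = s +o N"
    using coset_eq_iff[OF assms] by simp
  ultimately show "A \<in> (\<lambda>x. x +o N) ` S"
    by blast
next
  fix A assume "A \<in> (\<lambda>x. x +o N) ` S"
  then obtain s where "s \<in> S" "A = s +o N"
    by blast
  moreover have "s + 0 \<in> S + N"
    using \<open>s \<in> S\<close> additive_subgroup_0[OF assms] by blast
  ultimately show "A \<in> (\<lambda>x. x +o N) ` (S + N)"
    by (metis add.right_neutral image_eqI)
qed

lemma Union_quot: "\<Union> (quot S N) = S + N"
  by (auto simp: quot_def set_plus_def elt_set_plus_def)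

lemma coset_quot_eq_iff:
  assumes M: "additive_subgroup M" and N: "additive_subgroup N"
  shows "(x +o N) +o quot M N = (y +o N) +o quot M N \<longleftrightarrow> x - y \<in> M + N"
proof -
  have NN: "N + N = N"
    using set_plus_additive_subgroup_absorb[OF N] additive_subgroup_0[OF N] by blast
  have lift: "(a +o N) +o quot M N = quot (a +o (M + N)) N" for a
  proof -
    have "(a +o N) +o quot M N = (\<lambda>m. (a +o N) + (m +o N)) ` M"
      by (simp add: quot_def elt_set_plus_eq_image image_image)
    also have "\<dots> = (\<lambda>m. (a + m) +o N) ` M"
      by (simp add: set_plus_rearrange NN)
    also have "\<dots> = quot (a +o M) N"
      by (simp add: quot_def elt_set_plus_eq_image[of a M] image_image)
    also have "\<dots> = quot (a +o (M + N)) N"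
      using quot_set_plus[OF N, of "a +o M"] by (simp add: set_plus_rearrange3)
    finally show ?thesis .
  qed
  have MNN: "a +o (M + N) + N = a +o (M + N)" for a
    by (simp add: set_plus_rearrange3 add.assoc NN)
  have "(x +o N) +o quot M N = (y +o N) +o quot M N \<longleftrightarrow> x +o (M + N) = y +o (M + N)"
    unfolding lift by (metis MNN Union_quot)
  also have "\<dots> \<longleftrightarrow> x - y \<in> M + N"
    by (rule coset_eq_iff[OF additive_subgroup_set_plus[OF M N]])
  finally show ?thesis .
qed

lemma quot_bij_betw_image:
  assumes N: "additive_subgroup N"
    and g: "\<And>x y. x \<in> S \<Longrightarrow> y \<in> S \<Longrightarrow> g x = g y \<longleftrightarrow> x - y \<in> N"
  shows "\<exists>\<Phi>. (\<forall>x\<in>S. \<Phi> (x +o N) = g x) \<and> bij_betw \<Phi> (quot S N) (g ` S)"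
proof -
  define \<Phi> where "\<Phi> A = g (SOME x. x \<in> S \<and> A = x +o N)" for A
  have \<Phi>_coset: "\<Phi> (x +o N) = g x" if "x \<in> S" for x
  proof -
    let ?x = "SOME x'. x' \<in> S \<and> x +o N = x' +o N"
    have "?x \<in> S \<and> x +o N = ?x +o N"
      using that by (intro someI_ex[of "\<lambda>x'. x' \<in> S \<and> x +o N = x' +o N"]) auto
    then show ?thesis
      unfolding \<Phi>_def
      using g[OF that] coset_eq_iff[OF N] by metis
  qed
  have "inj_on \<Phi> (quot S N)"
    by (auto simp: inj_on_def quot_def \<Phi>_coset g coset_eq_iff[OF N])
  moreover have "\<Phi> ` quot S N = g ` S"
    by (auto simp: quot_def \<Phi>_coset image_iff)
  ultimately show ?thesis
    using \<Phi>_coset by (auto simp: bij_betw_def)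
qed

section \<open>Filtered groups with compatible differentials\<close>

locale filtered_differentials =
  fixes F :: "int \<Rightarrow> 'a::ab_group_add set"
    and D :: "int \<Rightarrow> 'a \<Rightarrow> 'a"
  assumes F_subgroup: "additive_subgroup (F q)"
    and F_Suc_subset: "F (q + 1) \<subseteq> F q"
    and D_additive: "r \<ge> -1 \<Longrightarrow> additive (D r)"
    and D_D: "r \<ge> -1 \<Longrightarrow> s \<ge> -1 \<Longrightarrow> D r (D s x) = 0"
    and D_diff_D_pred: "r \<ge> 0 \<Longrightarrow> x \<in> Zset F D r p \<or> x \<in> Zset F D (r - 1) p \<Longrightarrow>
      D r x - D (r - 1) x \<in> Zset F D (r - 1) (p + r)"
begin

lemma F_antimono: "p \<le> q \<Longrightarrow> F q \<subseteq> F p"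
  by (induction q rule: int_ge_induct) (use F_Suc_subset in blast)+

lemma Zset_subset_F: "Zset F D r p \<subseteq> F p"
  by (auto simp: Zset_def)

lemma Zset_subgroup: "r \<ge> -1 \<Longrightarrow> additive_subgroup (Zset F D r p)"
  using F_subgroup additive.zero[OF D_additive] additive.diff[OF D_additive]
  by (simp add: additive_subgroup_def Zset_def)

lemma D_mem_Zset: "k \<ge> -1 \<Longrightarrow> j \<ge> -1 \<Longrightarrow> x \<in> Zset F D k p \<Longrightarrow> D k x \<in> Zset F D j (p + k)"
  using D_D additive_subgroup_0[OF F_subgroup] by (simp add: Zset_def)

lemma Zset_subset_pred:
  assumes "r \<ge> 0"
  shows "Zset F D r p \<subseteq> Zset F D (r - 1) p"
proof
  fix x assume x: "x \<in> Zset F D r p"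
  have "D r x - D (r - 1) x \<in> F (p + r)"
    using D_diff_D_pred[OF assms] x Zset_subset_F by blast
  moreover have "D r x \<in> F (p + r)"
    using x by (simp add: Zset_def)
  ultimately have "D (r - 1) x \<in> F (p + r)"
    using additive_subgroup_diff_mem_iff[OF F_subgroup] by blast
  then show "x \<in> Zset F D (r - 1) p"
    using x F_antimono[of "p + (r - 1)" "p + r"] by (auto simp: Zset_def)
qed

lemma Zset_pred_Suc_subset:
  assumes "r \<ge> 0"
  shows "Zset F D (r - 1) (p + 1) \<subseteq> Zset F D r p"
proof
  fix x assume x: "x \<in> Zset F D (r - 1) (p + 1)"
  have "D r x - D (r - 1) x \<in> F (p + 1 + r)"
    using D_diff_D_pred[OF assms] x Zset_subset_F by blast
  then have "D r x - D (r - 1) x \<in> F (p + r)"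
    using F_antimono[of "p + r" "p + 1 + r"] by auto
  moreover have "D (r - 1) x \<in> F (p + r)"
    using x by (simp add: Zset_def)
  ultimately have "D r x \<in> F (p + r)"
    using additive_subgroup_diff_mem_iff[OF F_subgroup] by blast
  then show "x \<in> Zset F D r p"
    using x F_Suc_subset by (auto simp: Zset_def)
qed

lemma Zset_Suc_iff:
  assumes "r \<ge> -1" and x: "x \<in> Zset F D r p"
  shows "x \<in> Zset F D (r + 1) p \<longleftrightarrow> D r x \<in> F (p + r + 1)"
proof -
  have "D (r + 1) x - D r x \<in> Zset F D r (p + (r + 1))"
    using D_diff_D_pred[of "r + 1" x p] assms by simp
  then have "D (r + 1) x - D r x \<in> F (p + r + 1)"
    using Zset_subset_F by (auto simp: ac_simps)
  then show ?thesis
    using x additive_subgroup_diff_mem_iff[OF F_subgroup] by (auto simp: Zset_def ac_simps)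
qed

lemma mem_Den_iff:
  "y \<in> Den F D r p \<longleftrightarrow>
    (\<exists>z \<in> Zset F D (r - 1) (p - r + 1). \<exists>u \<in> Zset F D (r - 1) (p + 1). y = D (r - 1) z + u)"
  unfolding Den_def set_plus_def by blast

lemma Den_subgroup: "r \<ge> 0 \<Longrightarrow> additive_subgroup (Den F D r p)"
  unfolding Den_def
  by (intro additive_subgroup_set_plus additive_subgroup_image Zset_subgroup D_additive) auto

lemma Zset_pred_Suc_subset_Den:
  assumes "r \<ge> 0"
  shows "Zset F D (r - 1) (p + 1) \<subseteq> Den F D r p"
proof
  fix u assume "u \<in> Zset F D (r - 1) (p + 1)"
  moreover have "0 \<in> Zset F D (r - 1) (p - r + 1)" and "D (r - 1) 0 = 0"
    using assms additive_subgroup_0[OF Zset_subgroup] additive.zero[OF D_additive] by auto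
  ultimately show "u \<in> Den F D r p"
    unfolding mem_Den_iff by force
qed

lemma D_Den_subset:
  assumes "r \<ge> 0"
  shows "D r ` Den F D r p \<subseteq> Den F D r (p + r)"
proof
  fix y assume "y \<in> D r ` Den F D r p"
  then obtain z u where z: "z \<in> Zset F D (r - 1) (p - r + 1)"
    and u: "u \<in> Zset F D (r - 1) (p + 1)" and y: "y = D r (D (r - 1) z + u)"
    by (auto simp: mem_Den_iff)
  have "y = D (r - 1) u + (D r u - D (r - 1) u)"
    using y assms additive.add[OF D_additive] D_D by simp
  moreover have "u \<in> Zset F D (r - 1) (p + r - r + 1)"
    using u by simp
  moreover have "D r u - D (r - 1) u \<in> Zset F D (r - 1) (p + r + 1)"
    using D_diff_D_pred[OF assms, of u "p + 1"] u by (simp add: ac_simps)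
  ultimately show "y \<in> Den F D r (p + r)"
    unfolding mem_Den_iff by blast
qed

lemma D_Zset_Suc_subset_Den:
  assumes "r \<ge> 0"
  shows "D r ` Zset F D (r + 1) p \<subseteq> Den F D r (p + r)"
proof
  fix y assume "y \<in> D r ` Zset F D (r + 1) p"
  then obtain x where x: "x \<in> Zset F D (r + 1) p" and y: "y = D r x"
    by blast
  have "D (r + 1) x - D r x \<in> Zset F D r (p + r + 1)"
    using D_diff_D_pred[of "r + 1" x p] assms x by (simp add: ac_simps)
  then have "D (r + 1) x - D r x \<in> Zset F D (r - 1) (p + r + 1)"
    using Zset_subset_pred[OF assms] by blast
  moreover have "D (r + 1) x \<in> Zset F D (r - 1) (p + r + 1)"
    using D_mem_Zset[OF _ _ x, of "r - 1"] assms by (simp add: ac_simps)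
  ultimately have "D r x \<in> Zset F D (r - 1) (p + r + 1)"
    using additive_subgroup_diff_mem_iff[OF Zset_subgroup[of "r - 1"]] assms by simp
  then show "y \<in> Den F D r (p + r)"
    using y Zset_pred_Suc_subset_Den[OF assms] by blast
qed

lemma Den_Suc_subset:
  assumes "r \<ge> 0"
  shows "Den F D (r + 1) p \<subseteq> D r ` Zset F D r (p - r) + Den F D r p"
proof
  fix y assume "y \<in> Den F D (r + 1) p"
  then obtain z u where "z \<in> Zset F D r (p - r)" and "u \<in> Zset F D r (p + 1)" and "y = D r z + u"
    by (auto simp: mem_Den_iff)
  moreover have "u \<in> Den F D r p"
    using \<open>u \<in> Zset F D r (p + 1)\<close> Zset_subset_pred[OF assms] Zset_pred_Suc_subset_Den[OF assms]
    by blast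
  ultimately show "y \<in> D r ` Zset F D r (p - r) + Den F D r p"
    by blast
qed

lemma Zset_Suc_inter_subset_Den:
  assumes r: "r \<ge> 0"
  shows "Zset F D (r + 1) p \<inter> (D r ` Zset F D r (p - r) + Den F D r p) \<subseteq> Den F D (r + 1) p"
proof
  fix x assume "x \<in> Zset F D (r + 1) p \<inter> (D r ` Zset F D r (p - r) + Den F D r p)"
  then obtain w z u where x: "x \<in> Zset F D (r + 1) p" and w: "w \<in> Zset F D r (p - r)"
    and z: "z \<in> Zset F D (r - 1) (p - r + 1)" and u: "u \<in> Zset F D (r - 1) (p + 1)"
    and x_eq: "x = D r w + (D (r - 1) z + u)"
    by (auto simp: mem_Den_iff elim!: set_plus_elim)
  define v where "v = u - (D r z - D (r - 1) z)"
  have "D r z - D (r - 1) z \<in> Zset F D (r - 1) (p + 1)"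
    using D_diff_D_pred[OF r, of z "p - r + 1"] z by simp
  then have v_pred: "v \<in> Zset F D (r - 1) (p + 1)"
    unfolding v_def using additive_subgroup_diff[OF Zset_subgroup] u r by simp
  have wz: "w + z \<in> Zset F D r (p - r)"
    using additive_subgroup_add[OF Zset_subgroup] w Zset_pred_Suc_subset[OF r, of "p - r"] z r
    by auto
  \<comment> \<open>Trading \<open>D (r - 1) z\<close> for \<open>D r z\<close> puts \<open>x\<close> in the shape of \<open>Den F D (r + 1) p\<close>.\<close>
  have x_eq': "x = D r (w + z) + v"
    unfolding x_eq v_def using additive.add[OF D_additive] r by simp
  have "D r (w + z) \<in> Zset F D (r + 1) p"
    using D_mem_Zset[OF _ _ wz, of "r + 1"] r by simp
  then have "x - D r (w + z) \<in> Zset F D (r + 1) p"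
    using additive_subgroup_diff[OF Zset_subgroup x] r by simp
  then have "v \<in> Zset F D (r + 1) p"
    using x_eq' by simp
  then have "D r v \<in> F (p + 1 + r)"
    using Zset_Suc_iff[of r v p] Zset_subset_pred[of "r + 1" p] r by (auto simp: ac_simps)
  then have "v \<in> Zset F D r (p + 1)"
    using v_pred by (simp add: Zset_def)
  with wz x_eq' show "x \<in> Den F D (r + 1) p"
    unfolding mem_Den_iff by auto
qed

lemma Zset_Suc_mod_Den:
  assumes r: "r \<ge> 0" and x: "x \<in> Zset F D r p" and Dx: "D r x \<in> Den F D r (p + r)"
  shows "\<exists>x' \<in> Zset F D (r + 1) p. x - x' \<in> Den F D r p"
proof -
  obtain z u where z: "z \<in> Zset F D (r - 1) (p + 1)" and u: "u \<in> Zset F D (r - 1) (p + r + 1)"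
    and Dx_eq: "D r x = D (r - 1) z + u"
    using Dx by (auto simp: mem_Den_iff)
  have "D r z - D (r - 1) z \<in> Zset F D (r - 1) (p + r + 1)"
    using D_diff_D_pred[OF r, of z "p + 1"] z by (simp add: ac_simps)
  then have "u - (D r z - D (r - 1) z) \<in> F (p + r + 1)"
    using additive_subgroup_diff[OF Zset_subgroup u] Zset_subset_F r by auto
  moreover have "D r (x - z) = u - (D r z - D (r - 1) z)"
    using Dx_eq additive.diff[OF D_additive] r by simp
  ultimately have "D r (x - z) \<in> F (p + r + 1)"
    by simp
  moreover have "x - z \<in> Zset F D r p"
    using additive_subgroup_diff[OF Zset_subgroup x] Zset_pred_Suc_subset[OF r] z r by auto
  ultimately have "x - z \<in> Zset F D (r + 1) p"
    using Zset_Suc_iff r by simp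
  moreover have "z \<in> Den F D r p"
    using Zset_pred_Suc_subset_Den[OF r] z by blast
  ultimately show ?thesis
    by (intro bexI[of _ "x - z"]) simp_all
qed

subsection \<open>The differential on E^r and its cohomology\<close>

definition E_diff :: "int \<Rightarrow> int \<Rightarrow> 'a set \<Rightarrow> 'a set" where
  "E_diff r p A = D r ` A + Den F D r (p + r)"

lemma E_diff_coset:
  assumes "r \<ge> 0"
  shows "E_diff r p (x +o Den F D r p) = D r x +o Den F D r (p + r)"
proof -
  have "D r ` Den F D r p + Den F D r (p + r) = Den F D r (p + r)"
    using set_plus_additive_subgroup_absorb[OF Den_subgroup D_Den_subset] assms
      additive_subgroup_0[OF Den_subgroup] by blast
  then show ?thesis
    using assms by (simp add: E_diff_def image_coset D_additive set_plus_rearrange3)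
qed

lemma Eset_eq_image: "Eset F D r p = (\<lambda>x. x +o Den F D r p) ` Zset F D r p"
  by (simp add: Eset_def quot_def)

lemma E_diff_image_subset:
  assumes "r \<ge> 0"
  shows "E_diff r p ` Eset F D r p \<subseteq> Eset F D r (p + r)"
  using assms D_mem_Zset[of r r _ p] by (auto simp: Eset_eq_image E_diff_coset)

lemma E_diff_E_diff:
  assumes "r \<ge> 0" and "A \<in> Eset F D r p"
  shows "E_diff r (p + r) (E_diff r p A) = Den F D r (p + r + r)"
  using assms D_D[of r r] by (auto simp: Eset_eq_image E_diff_coset)

lemma ker_E_diff:
  assumes r: "r \<ge> 0"
  shows "{A \<in> Eset F D r p. E_diff r p A = Den F D r (p + r)} = quot (Zset F D (r + 1) p) (Den F D r p)"
proof (intro equalityI subsetI)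
  fix A assume "A \<in> {A \<in> Eset F D r p. E_diff r p A = Den F D r (p + r)}"
  then obtain x where x: "x \<in> Zset F D r p" and A: "A = x +o Den F D r p"
    and "D r x \<in> Den F D r (p + r)"
    using coset_eq_subgroup_iff[OF Den_subgroup] r by (auto simp: Eset_eq_image E_diff_coset)
  then obtain x' where "x' \<in> Zset F D (r + 1) p" and "x - x' \<in> Den F D r p"
    using Zset_Suc_mod_Den r by blast
  then show "A \<in> quot (Zset F D (r + 1) p) (Den F D r p)"
    unfolding A quot_def using coset_eq_iff[OF Den_subgroup] r by auto
next
  fix A assume "A \<in> quot (Zset F D (r + 1) p) (Den F D r p)"
  then obtain x where x: "x \<in> Zset F D (r + 1) p" and A: "A = x +o Den F D r p"
    by (auto simp: quot_def)
  have "x \<in> Zset F D r p"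
    using Zset_subset_pred[of "r + 1"] x r by auto
  moreover have "D r x \<in> Den F D r (p + r)"
    using D_Zset_Suc_subset_Den[OF r] x by blast
  ultimately show "A \<in> {A \<in> Eset F D r p. E_diff r p A = Den F D r (p + r)}"
    using coset_eq_subgroup_iff[OF Den_subgroup] r by (auto simp: A Eset_eq_image E_diff_coset)
qed

lemma image_E_diff:
  assumes "r \<ge> 0"
  shows "E_diff r (p - r) ` Eset F D r (p - r) = quot (D r ` Zset F D r (p - r)) (Den F D r p)"
  using assms by (simp add: Eset_eq_image quot_def image_image E_diff_coset)

lemma E_Suc_iso_cohom:
  assumes r: "r \<ge> 0"
  shows "\<exists>\<Phi>. (\<forall>x \<in> Zset F D (r + 1) p.
              \<Phi> (x +o Den F D (r + 1) p) = (x +o Den F D r p) +o (E_diff r (p - r) ` Eset F D r (p - r))) \<and>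
            bij_betw \<Phi> (Eset F D (r + 1) p) (cohom (Eset F D r) (Den F D r) (E_diff r) r p)"
proof -
  let ?Z = "Zset F D (r + 1) p" and ?N = "Den F D r p" and ?M = "D r ` Zset F D r (p - r)"
  let ?g = "\<lambda>x. (x +o ?N) +o quot ?M ?N"
  have M: "additive_subgroup ?M"
    using r by (intro additive_subgroup_image Zset_subgroup D_additive) auto
  have g_eq_iff: "?g x = ?g y \<longleftrightarrow> x - y \<in> Den F D (r + 1) p" if "x \<in> ?Z" "y \<in> ?Z" for x y
  proof -
    have "x - y \<in> ?Z"
      using additive_subgroup_diff[OF Zset_subgroup that] r by simp
    then have "x - y \<in> ?M + ?N \<longleftrightarrow> x - y \<in> Den F D (r + 1) p"
      using Den_Suc_subset[OF r] Zset_Suc_inter_subset_Den[OF r] by (meson IntI subsetD)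
    then show ?thesis
      by (simp add: coset_quot_eq_iff[OF M Den_subgroup[OF r]])
  qed
  have "r + 1 \<ge> 0"
    using r by simp
  obtain \<Phi> where \<Phi>: "\<forall>x \<in> ?Z. \<Phi> (x +o Den F D (r + 1) p) = ?g x"
    and bij: "bij_betw \<Phi> (quot ?Z (Den F D (r + 1) p)) (?g ` ?Z)"
    using quot_bij_betw_image[OF Den_subgroup[OF \<open>r + 1 \<ge> 0\<close>] g_eq_iff] by blast
  have "?g ` ?Z = quot (quot ?Z ?N) (quot ?M ?N)"
    by (simp add: quot_def image_image)
  also have "\<dots> = cohom (Eset F D r) (Den F D r) (E_diff r) r p"
    by (simp add: cohom_def ker_E_diff[OF r] image_E_diff[OF r])
  finally have "bij_betw \<Phi> (Eset F D (r + 1) p) (cohom (Eset F D r) (Den F D r) (E_diff r) r p)"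
    using bij by (simp add: Eset_def)
  with \<Phi> show ?thesis
    by (intro exI[of _ \<Phi>]) (simp add: image_E_diff[OF r])
qed

end

theorem mainTheorem4:
  fixes scale :: "'r::comm_ring_1 \<Rightarrow> 'a::ab_group_add \<Rightarrow> 'a"
    and F :: "int \<Rightarrow> 'a set"
    and D :: "int \<Rightarrow> 'a \<Rightarrow> 'a"
  assumes mod: "module scale"
    and sub: "\<And>q. module.subspace scale (F q)"
    and neg: "\<And>q. q \<le> 0 \<Longrightarrow> F q = UNIV"
    and decr: "\<And>q. F (q + 1) \<subseteq> F q"
    and lin: "\<And>r. r \<ge> -1 \<Longrightarrow> module_hom scale scale (D r)"
    and pres: "\<And>r p. r \<ge> -1 \<Longrightarrow> D r ` F p \<subseteq> F p"
    and Dm1: "\<And>x. D (-1) x = 0"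
    and DD: "\<And>r s x. r \<ge> -1 \<Longrightarrow> s \<ge> -1 \<Longrightarrow> D r (D s x) = 0"
    and hyp: "\<And>r p x. r \<ge> 0 \<Longrightarrow> x \<in> Zset F D r p \<or> x \<in> Zset F D (r - 1) p \<Longrightarrow>
                 D r x - D (r - 1) x \<in> Zset F D (r - 1) (p + r)"
    and r: "r \<ge> 0"
  shows "\<exists>d :: int \<Rightarrow> 'a set \<Rightarrow> 'a set.
           (\<forall>p. \<forall>x \<in> Zset F D r p.
               d p (x +o Den F D r p) = D r x +o Den F D r (p + r)) \<and>
           (\<forall>p. d p ` Eset F D r p \<subseteq> Eset F D r (p + r)) \<and>
           (\<forall>p. \<forall>A \<in> Eset F D r p. d (p + r) (d p A) = Den F D r (p + r + r)) \<and>
           (\<forall>p. \<exists>\<Phi>.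
               (\<forall>x \<in> Zset F D (r + 1) p.
                  \<Phi> (x +o Den F D (r + 1) p) = (x +o Den F D r p) +o (d (p - r) ` Eset F D r (p - r))) \<and>
               bij_betw \<Phi> (Eset F D (r + 1) p) (cohom (Eset F D r) (Den F D r) d r p))"
proof -
  \<comment> \<open>Only the additive structure matters.\<close>
  interpret filtered_differentials F D
  proof (rule filtered_differentials.intro)
    show "additive_subgroup (F q)" for q
      using module.subspace_0[OF mod sub] module.subspace_diff[OF mod sub]
      by (simp add: additive_subgroup_def)
    show "additive (D k)" if "k \<ge> -1" for k
      using module_hom.add[OF lin[OF that]] by (rule additive.intro)
  qed (use decr DD hyp in auto)
  show ?thesis
    by (intro exI[of _ "E_diff r"] conjI allI ballI E_diff_coset E_diff_image_subset
        E_diff_E_diff E_Suc_iso_cohom r)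
qed

end
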